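(* Let $n,m,v\ge1$, let $\Omega$ be a simple witness for a memory system $S(n,m,v)$, let $\lambda$ be a permutation of $\mathbb{N}_m$, and let $\tau,\tau'$ be unambiguous traces of $S(n,m,v)$ with $\tau'=\lambda^l(\tau)$. Then for all $1\le x,y\le|\tau|$ and all $1\le i\le m$: $\langle x,y\rangle\in\Omega^e(\tau,i)$ if and only if $\langle x,y\rangle\in\Omega^e(\tau',\lambda(i))$.
   Context: $\mathbb{N}_n=\{1,\dots,n\}$, $\mathbb{W}_v=\{0,\dots,v\}$. Memory events $E(n,m,v)=\{R,W\}\times\mathbb{N}_n\times\mathbb{N}_m\times\mathbb{W}_v$; for $e=\langle a,b,c,d\rangle$, $op(e)=a$, $proc(e)=b$, $loc(e)=c$, $data(e)=d$; $0$ models the initial value of every location. A memory system $S(n,m,v)$ is a regular set of finite runs over an alphabet containing $E(n,m,v)$ (other letters being internal events); a trace is the subsequence of memory events of a run. For a sequence $\tau$ of memory events: $L(\tau,j)=\{k: loc(\tau(k))=j\}$, $L^w(\tau,j)=\{k\in L(\tau,j): op(\tau(k))=W\}$. A trace $\tau$ is unambiguous if for every location $j$ and $x\in L^w(\tau,j)$, $data(\tau(x))\ne0$ and $data(\tau(x))\ne data(\tau(y))$ for all $y\in L^w(\tau,j)\setminus\{x\}$. A witness $\Omega$ assigns to each trace $\tau$ and location $j$ a strict total order $\Omega(\tau,j)$ on $L^w(\tau,j)$; it is simple if $\langle x,y\rangle\in\Omega(\tau,j)$ iff $x<y$, for all $x,y\in L^w(\tau,j)$. For unambiguous $\tau$,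 $\Omega^e(\tau,j)\subseteq L(\tau,j)^2$: $\langle x,y\rangle\in\Omega^e(\tau,j)$ iff (1) $data(\tau(x))=data(\tau(y))$, $op(\tau(x))=W$, $op(\tau(y))=R$; or (2) $data(\tau(x))=0$ and $data(\tau(y))\ne0$; or (3) there are $a,b\in L^w(\tau,j)$ with $\langle a,b\rangle\in\Omega(\tau,j)$, $data(\tau(a))=data(\tau(x))$, $data(\tau(b))=data(\tau(y))$. For a permutation $\lambda$ of $\mathbb{N}_m$, $\lambda^l(\langle a,b,c,d\rangle)=\langle a,b,\lambda(c),d\rangle$, extended letterwise to sequences. *)

theory Defs
  imports "HOL-Combinatorics.Permutations"
begin

datatype memop = R | W

type_synonym event = "memop \<times> nat \<times> nat \<times> nat"

definition op_of :: "event \<Rightarrow> memop" where "op_of e = fst e"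
definition proc :: "event \<Rightarrow> nat" where "proc e = fst (snd e)"
definition loc :: "event \<Rightarrow> nat" where "loc e = fst (snd (snd e))"
definition data :: "event \<Rightarrow> nat" where "data e = snd (snd (snd e))"

definition events :: "nat \<Rightarrow> nat \<Rightarrow> nat \<Rightarrow> event set" where
  "events n m v = {e. proc e \<in> {1..n} \<and> loc e \<in> {1..m} \<and> data e \<in> {0..v}}"

definition regular_lang :: "'a list set \<Rightarrow> bool" where
  "regular_lang L \<longleftrightarrow> (\<exists>(Q::nat set) (\<delta>::nat \<Rightarrow> 'a \<Rightarrow> nat) q0 F.
      finite Q \<and> q0 \<in> Q \<and> F \<subseteq> Q \<and> (\<forall>q\<in>Q. \<forall>a. \<delta> q a \<in> Q) \<and>
      L = {w. foldl \<delta> q0 w \<in> F})"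

text \<open>Runs are words over letters that are either internal events (Inl) or
  memory events (Inr).\<close>
definition memory_system :: "nat \<Rightarrow> nat \<Rightarrow> nat \<Rightarrow> ('i + event) list set \<Rightarrow> bool" where
  "memory_system n m v S \<longleftrightarrow> regular_lang S \<and>
     (\<exists>\<Sigma>. finite \<Sigma> \<and> (\<forall>r\<in>S. set r \<subseteq> \<Sigma>)) \<and>
     (\<forall>r\<in>S. \<forall>e. Inr e \<in> set r \<longrightarrow> e \<in> events n m v)"

definition trace :: "('i + event) list \<Rightarrow> event list" where
  "trace r = concat (map (case_sum (\<lambda>_. []) (\<lambda>e. [e])) r)"

definition traces :: "('i + event) list set \<Rightarrow> event list set" where
  "traces S = trace ` S"

text \<open>1-based indexing into a sequence.\<close>
definition at :: "event list \<Rightarrow> nat \<Rightarrow> event" where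
  "at \<tau> k = \<tau> ! (k - 1)"

definition L :: "event list \<Rightarrow> nat \<Rightarrow> nat set" where
  "L \<tau> j = {k. 1 \<le> k \<and> k \<le> length \<tau> \<and> loc (at \<tau> k) = j}"

definition Lw :: "event list \<Rightarrow> nat \<Rightarrow> nat set" where
  "Lw \<tau> j = {k \<in> L \<tau> j. op_of (at \<tau> k) = W}"

definition unambiguous :: "event list \<Rightarrow> bool" where
  "unambiguous \<tau> \<longleftrightarrow> (\<forall>j. \<forall>x\<in>Lw \<tau> j. data (at \<tau> x) \<noteq> 0 \<and>
      (\<forall>y\<in>Lw \<tau> j - {x}. data (at \<tau> x) \<noteq> data (at \<tau> y)))"

definition witness :: "nat \<Rightarrow> ('i + event) list set \<Rightarrow> (event list \<Rightarrow> nat \<Rightarrow> nat rel) \<Rightarrow> bool" where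
  "witness m S \<Omega> \<longleftrightarrow> (\<forall>\<tau>\<in>traces S. \<forall>j\<in>{1..m}.
      \<Omega> \<tau> j \<subseteq> Lw \<tau> j \<times> Lw \<tau> j \<and> strict_linear_order_on (Lw \<tau> j) (\<Omega> \<tau> j))"

definition simple_witness :: "nat \<Rightarrow> ('i + event) list set \<Rightarrow> (event list \<Rightarrow> nat \<Rightarrow> nat rel) \<Rightarrow> bool" where
  "simple_witness m S \<Omega> \<longleftrightarrow> witness m S \<Omega> \<and>
     (\<forall>\<tau>\<in>traces S. \<forall>j\<in>{1..m}. \<forall>x\<in>Lw \<tau> j. \<forall>y\<in>Lw \<tau> j. (x, y) \<in> \<Omega> \<tau> j \<longleftrightarrow> x < y)"

definition Omega_e :: "(event list \<Rightarrow> nat \<Rightarrow> nat rel) \<Rightarrow> event list \<Rightarrow> nat \<Rightarrow> nat rel" where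
  "Omega_e \<Omega> \<tau> j = {(x, y). x \<in> L \<tau> j \<and> y \<in> L \<tau> j \<and>
     ((data (at \<tau> x) = data (at \<tau> y) \<and> op_of (at \<tau> x) = W \<and> op_of (at \<tau> y) = R) \<or>
      (data (at \<tau> x) = 0 \<and> data (at \<tau> y) \<noteq> 0) \<or>
      (\<exists>a\<in>Lw \<tau> j. \<exists>b\<in>Lw \<tau> j. (a, b) \<in> \<Omega> \<tau> j \<and>
          data (at \<tau> a) = data (at \<tau> x) \<and> data (at \<tau> b) = data (at \<tau> y)))}"

definition loc_perm :: "(nat \<Rightarrow> nat) \<Rightarrow> event list \<Rightarrow> event list" where
  "loc_perm lam \<tau> = map (\<lambda>(a, b, c, d). (a, b, lam c, d)) \<tau>"

end

theory Submission
  imports Defs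
begin

text \<open>Renaming locations by an injective \<open>\<lambda>\<close> changes neither the positions that access a
  given location nor the operation and data of any event.  Under a simple witness the
  order \<open>\<Omega>(\<tau>, i)\<close> is just the position order on \<open>L\<^sup>w(\<tau>, i)\<close>, so \<open>\<Omega>(\<lambda>\<^sup>l(\<tau>), \<lambda>(i)) = \<Omega>(\<tau>, i)\<close>.
  Since \<open>\<Omega>\<^sup>e(\<tau>, i)\<close> is determined by these data, it is invariant as well.\<close>

lemma length_loc_perm [simp]: "length (loc_perm lam \<tau>) = length \<tau>"
  by (simp add: loc_perm_def)

lemma at_loc_perm:
  assumes "1 \<le> k" "k \<le> length \<tau>"
  shows "op_of (at (loc_perm lam \<tau>) k) = op_of (at \<tau> k)"
    and "data (at (loc_perm lam \<tau>) k) = data (at \<tau> k)"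
    and "loc (at (loc_perm lam \<tau>) k) = lam (loc (at \<tau> k))"
  using assms by (auto simp: loc_perm_def at_def op_of_def data_def loc_def split: prod.splits)

lemma L_loc_perm:
  assumes "inj lam"
  shows "L (loc_perm lam \<tau>) (lam i) = L \<tau> i"
  using assms at_loc_perm(3)[of _ \<tau> lam] by (auto simp: L_def inj_eq)

lemma Lw_loc_perm:
  assumes "inj lam"
  shows "Lw (loc_perm lam \<tau>) (lam i) = Lw \<tau> i"
  using at_loc_perm(1)[of _ \<tau> lam] unfolding Lw_def L_loc_perm[OF assms] by (auto simp: L_def)

lemma simple_witness_eq:
  assumes "simple_witness m S \<Omega>" "\<tau> \<in> traces S" "j \<in> {1..m}"
  shows "\<Omega> \<tau> j = {(a, b) \<in> Lw \<tau> j \<times> Lw \<tau> j. a < b}"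
  using assms unfolding simple_witness_def witness_def by blast

lemma Omega_e_cong:
  assumes "L \<tau>' j = L \<tau> i" "Lw \<tau>' j = Lw \<tau> i" "\<Omega>' \<tau>' j = \<Omega> \<tau> i"
    and op_eq: "\<And>k. k \<in> L \<tau> i \<Longrightarrow> op_of (at \<tau>' k) = op_of (at \<tau> k)"
    and data_eq: "\<And>k. k \<in> L \<tau> i \<Longrightarrow> data (at \<tau>' k) = data (at \<tau> k)"
  shows "Omega_e \<Omega>' \<tau>' j = Omega_e \<Omega> \<tau> i"
proof -
  have "Lw \<tau> i \<subseteq> L \<tau> i" by (auto simp: Lw_def)
  then have ordered_values_eq:
    "(\<exists>a\<in>Lw \<tau>' j. \<exists>b\<in>Lw \<tau>' j. (a, b) \<in> \<Omega>' \<tau>' j \<and> data (at \<tau>' a) = X \<and> data (at \<tau>' b) = Y)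
      \<longleftrightarrow> (\<exists>a\<in>Lw \<tau> i. \<exists>b\<in>Lw \<tau> i. (a, b) \<in> \<Omega> \<tau> i \<and> data (at \<tau> a) = X \<and> data (at \<tau> b) = Y)"
    for X Y using assms(2,3) data_eq by (intro bex_cong) auto
  have "(x, y) \<in> Omega_e \<Omega>' \<tau>' j \<longleftrightarrow> (x, y) \<in> Omega_e \<Omega> \<tau> i" for x y
  proof (cases "x \<in> L \<tau> i \<and> y \<in> L \<tau> i")
    case True
    then have events_eq: "op_of (at \<tau>' x) = op_of (at \<tau> x)" "op_of (at \<tau>' y) = op_of (at \<tau> y)"
      "data (at \<tau>' x) = data (at \<tau> x)" "data (at \<tau>' y) = data (at \<tau> y)"
      using op_eq data_eq by auto
    show ?thesis
      unfolding Omega_e_def assms(1) ordered_values_eq mem_Collect_eq case_prod_conv events_eq ..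
  next
    case False
    then show ?thesis unfolding Omega_e_def assms(1) by auto
  qed
  then show ?thesis by auto
qed

theorem lemma7p4:
  fixes n m v :: nat and S :: "('i + event) list set"
    and \<Omega> :: "event list \<Rightarrow> nat \<Rightarrow> nat rel"
    and lam :: "nat \<Rightarrow> nat" and \<tau> \<tau>' :: "event list"
  assumes "n \<ge> 1" "m \<ge> 1" "v \<ge> 1"
    and "memory_system n m v S"
    and "simple_witness m S \<Omega>"
    and "lam permutes {1..m}"
    and "\<tau> \<in> traces S" "\<tau>' \<in> traces S"
    and "unambiguous \<tau>" "unambiguous \<tau>'"
    and "\<tau>' = loc_perm lam \<tau>"
  shows "\<forall>x\<in>{1..length \<tau>}. \<forall>y\<in>{1..length \<tau>}. \<forall>i\<in>{1..m}.
           (x, y) \<in> Omega_e \<Omega> \<tau> i \<longleftrightarrow> (x, y) \<in> Omega_e \<Omega> \<tau>' (lam i)"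
proof (intro ballI)
  fix x y i assume i: "i \<in> {1..m}"
  have inj: "inj lam" using \<open>lam permutes {1..m}\<close> by (rule permutes_inj)
  have "lam i \<in> {1..m}" using permutes_in_image[OF \<open>lam permutes {1..m}\<close>] i by blast
  then have "\<Omega> \<tau>' (lam i) = \<Omega> \<tau> i"
    using simple_witness_eq[OF \<open>simple_witness m S \<Omega>\<close>] \<open>\<tau> \<in> traces S\<close> \<open>\<tau>' \<in> traces S\<close> i
    by (simp add: \<open>\<tau>' = loc_perm lam \<tau>\<close> Lw_loc_perm[OF inj])
  moreover have "op_of (at \<tau>' k) = op_of (at \<tau> k)" "data (at \<tau>' k) = data (at \<tau> k)"
    if "k \<in> L \<tau> i" for k
    using that at_loc_perm(1,2)[of k \<tau> lam] by (simp_all add: \<open>\<tau>' = loc_perm lam \<tau>\<close> L_def)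
  ultimately have "Omega_e \<Omega> \<tau>' (lam i) = Omega_e \<Omega> \<tau> i"
    by (intro Omega_e_cong) (simp_all add: \<open>\<tau>' = loc_perm lam \<tau>\<close> L_loc_perm[OF inj] Lw_loc_perm[OF inj])
  then show "(x, y) \<in> Omega_e \<Omega> \<tau> i \<longleftrightarrow> (x, y) \<in> Omega_e \<Omega> \<tau>' (lam i)" by simp
qed

end
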